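(* Let $\langle A, \leq, \otimes, \ominus, \mathbf{1}\rangle$ be a residuated partially ordered monoid with bottom element $\bot$, let $k\geq1$ and $a = a_1\ldots a_k$, $b = b_1\ldots b_k \in Lex_k(A)$. Define $\gamma(a,b) = \min\{ i \mid a_i \ominus b_i \in C(A)\}$ and $\delta(a,b) = \min\{ i \mid (a_i \ominus b_i) \otimes b_i < a_i\}$, each being $k+1$ when the set is empty. Then either $\delta(a,b) = k+1$ or $\delta(a,b) \leq \gamma(a,b)$.
   Context: A residuated partially ordered monoid $\langle A, \leq, \otimes, \ominus, \mathbf{1}\rangle$ consists of a partial order $\langle A,\leq\rangle$, a commutative monoid $\langle A,\otimes,\mathbf{1}\rangle$, and a binary operation $\ominus$ on $A$ such that for all $a,b,c\in A$: $b \otimes c \leq a$ iff $c \leq a \ominus b$. $a<b$ means $a\leq b$, $a\neq b$. $I(A) = \{c \in A \mid \forall a,b \in A.\ a \otimes c = b \otimes c \Rightarrow a = b\}$, $C(A)=A\setminus I(A)$. $Lex_k(A)\subseteq A^k$ is defined by $Lex_1(A) = A$ and $Lex_{k+1}(A) = I(A)\, Lex_k(A) \cup C(A)\{\bot\}^k$, where $XY$ denotes the set of concatenations of sequences and $\{\bot\}^k$ the singleton of the sequence of $k$ copies of $\bot$. *)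

theory Defs
  imports Main
begin

text \<open>A residuated partially ordered monoid on the whole type 'a:
  le is a partial order, (mult, one) a commutative monoid, res the residual,
  with  mult b c \<le> a  iff  c \<le> res a b  (res a b stands for a \<ominus> b).\<close>

definition residuated_pomonoid ::
  "('a \<Rightarrow> 'a \<Rightarrow> bool) \<Rightarrow> ('a \<Rightarrow> 'a \<Rightarrow> 'a) \<Rightarrow> ('a \<Rightarrow> 'a \<Rightarrow> 'a) \<Rightarrow> 'a \<Rightarrow> bool" where
  "residuated_pomonoid le mult res one \<longleftrightarrow>
     (\<forall>a. le a a) \<and>
     (\<forall>a b. le a b \<and> le b a \<longrightarrow> a = b) \<and>
     (\<forall>a b c. le a b \<and> le b c \<longrightarrow> le a c) \<and>
     (\<forall>a b c. mult (mult a b) c = mult a (mult b c)) \<and>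
     (\<forall>a b. mult a b = mult b a) \<and>
     (\<forall>a. mult one a = a) \<and>
     (\<forall>a b c. le (mult b c) a \<longleftrightarrow> le c (res a b))"

definition is_bottom :: "('a \<Rightarrow> 'a \<Rightarrow> bool) \<Rightarrow> 'a \<Rightarrow> bool" where
  "is_bottom le bt \<longleftrightarrow> (\<forall>a. le bt a)"

definition strict :: "('a \<Rightarrow> 'a \<Rightarrow> bool) \<Rightarrow> 'a \<Rightarrow> 'a \<Rightarrow> bool" where
  "strict le a b \<longleftrightarrow> le a b \<and> a \<noteq> b"

definition Icanc :: "('a \<Rightarrow> 'a \<Rightarrow> 'a) \<Rightarrow> 'a set" where
  "Icanc mult = {c. \<forall>a b. mult a c = mult b c \<longrightarrow> a = b}"

definition Cnon :: "('a \<Rightarrow> 'a \<Rightarrow> 'a) \<Rightarrow> 'a set" where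
  "Cnon mult = UNIV - Icanc mult"

fun Lex :: "('a \<Rightarrow> 'a \<Rightarrow> 'a) \<Rightarrow> 'a \<Rightarrow> nat \<Rightarrow> 'a list set" where
  "Lex mult bt 0 = {}"
| "Lex mult bt (Suc 0) = {[x] | x. True}"
| "Lex mult bt (Suc (Suc k)) =
     {c # xs | c xs. c \<in> Icanc mult \<and> xs \<in> Lex mult bt (Suc k)}
     \<union> {c # replicate (Suc k) bt | c. c \<in> Cnon mult}"

text \<open>gamma and delta, with positions 1..k (list index i-1), default k+1.\<close>
definition gamma :: "('a \<Rightarrow> 'a \<Rightarrow> 'a) \<Rightarrow> ('a \<Rightarrow> 'a \<Rightarrow> 'a) \<Rightarrow> nat \<Rightarrow> 'a list \<Rightarrow> 'a list \<Rightarrow> nat" where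
  "gamma mult res k a b =
     Min ({i \<in> {1..k}. res (a ! (i - 1)) (b ! (i - 1)) \<in> Cnon mult} \<union> {k + 1})"

definition delta :: "('a \<Rightarrow> 'a \<Rightarrow> bool) \<Rightarrow> ('a \<Rightarrow> 'a \<Rightarrow> 'a) \<Rightarrow> ('a \<Rightarrow> 'a \<Rightarrow> 'a) \<Rightarrow> nat \<Rightarrow> 'a list \<Rightarrow> 'a list \<Rightarrow> nat" where
  "delta le mult res k a b =
     Min ({i \<in> {1..k}. strict le (mult (res (a ! (i - 1)) (b ! (i - 1))) (b ! (i - 1))) (a ! (i - 1))} \<union> {k + 1})"

end

theory Submission
  imports Defs
begin

text \<open>Suppose \<gamma> < \<delta> \<le> k and let g = \<gamma>. Since g < \<delta>, the residual c = a_g \<ominus> b_g satisfies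
  c \<otimes> b_g = a_g exactly. A factor of a cancellative element is cancellative, and c is not,
  so a_g \<in> C(A). By the shape of Lex_k(A) every later entry of a is \<bottom>, in particular a_\<delta> = \<bottom>;
  but (\<bottom> \<ominus> b_\<delta>) \<otimes> b_\<delta> = \<bottom>, contradicting the choice of \<delta>.\<close>

definition first_index :: "nat \<Rightarrow> (nat \<Rightarrow> bool) \<Rightarrow> nat" where
  "first_index k P = Min ({i \<in> {1..k}. P i} \<union> {k + 1})"

lemma first_index_le: "i \<in> {1..k} \<Longrightarrow> P i \<Longrightarrow> first_index k P \<le> i"
  unfolding first_index_def by simp

lemma first_index_holds:
  assumes "first_index k P \<noteq> k + 1"
  shows "first_index k P \<in> {1..k}" and "P (first_index k P)"
proof -
  have "first_index k P \<in> {i \<in> {1..k}. P i} \<union> {k + 1}"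
    unfolding first_index_def by (rule Min_in) auto
  with assms show "first_index k P \<in> {1..k}" and "P (first_index k P)" by auto
qed

lemma gamma_eq_first_index:
  "gamma mult res k a b = first_index k (\<lambda>i. res (a ! (i - 1)) (b ! (i - 1)) \<in> Cnon mult)"
  unfolding gamma_def first_index_def ..

lemma delta_eq_first_index:
  "delta le mult res k a b =
     first_index k (\<lambda>i. strict le (mult (res (a ! (i - 1)) (b ! (i - 1))) (b ! (i - 1))) (a ! (i - 1)))"
  unfolding delta_def first_index_def ..

lemma residuated_mult_res_le:
  assumes "residuated_pomonoid le mult res one"
  shows "le (mult (res x y) y) x"
proof -
  note R = assms[unfolded residuated_pomonoid_def]
  have "le (mult y (res x y)) x" using R by blast
  then show ?thesis using R by metis
qed

lemma residuated_mult_res_eq_if_not_strict: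
  assumes "residuated_pomonoid le mult res one"
    and "\<not> strict le (mult (res x y) y) x"
  shows "mult (res x y) y = x"
  using assms residuated_mult_res_le unfolding strict_def by metis

lemma residuated_bottom_not_strict:
  assumes "residuated_pomonoid le mult res one" and "is_bottom le bt"
  shows "\<not> strict le (mult (res bt y) y) bt"
proof -
  have "le (mult (res bt y) y) bt" using assms(1) by (rule residuated_mult_res_le)
  moreover have "le bt (mult (res bt y) y)" using assms(2) unfolding is_bottom_def by blast
  ultimately show ?thesis using assms(1) unfolding residuated_pomonoid_def strict_def by blast
qed

lemma Icanc_left_factor:
  assumes assoc: "\<And>x y z. mult (mult x y) z = mult x (mult y z)"
    and "mult c d \<in> Icanc mult"
  shows "c \<in> Icanc mult"
  unfolding Icanc_def
proof (intro CollectI allI impI)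
  fix x y assume "mult x c = mult y c"
  then have "mult x (mult c d) = mult y (mult c d)" by (metis assoc)
  then show "x = y" using assms(2) unfolding Icanc_def by blast
qed

lemma length_Lex: "xs \<in> Lex mult bt n \<Longrightarrow> length xs = n"
  by (induction mult bt n arbitrary: xs rule: Lex.induct) auto

lemma Lex_nth_bottom_after_Cnon:
  "xs \<in> Lex mult bt n \<Longrightarrow> xs ! i \<in> Cnon mult \<Longrightarrow> i < j \<Longrightarrow> j < length xs \<Longrightarrow> xs ! j = bt"
proof (induction mult bt n arbitrary: xs i j rule: Lex.induct)
  case (1 mult bt)
  then show ?case by simp
next
  case (2 mult bt)
  then show ?case by auto
next
  case (3 mult bt k)
  obtain j' where j: "j = Suc j'" using \<open>i < j\<close> by (cases j) auto
  from "3.prems"(1) consider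
      c ys where "xs = c # ys" "c \<in> Icanc mult" "ys \<in> Lex mult bt (Suc k)"
    | c where "xs = c # replicate (Suc k) bt"
    by auto
  then show ?case
  proof cases
    case (1 c ys)
    have "i \<noteq> 0" using "3.prems"(2) 1 by (metis Cnon_def DiffD2 nth_Cons_0)
    then obtain i' where "i = Suc i'" by (cases i) auto
    then show ?thesis using "3.IH"[OF \<open>ys \<in> _\<close>, of i' j'] "3.prems" 1 j by simp
  next
    case (2 c)
    then show ?thesis using "3.prems"(4) j by (simp del: replicate_Suc)
  qed
qed

theorem lemma9:
  fixes le :: "'a \<Rightarrow> 'a \<Rightarrow> bool" and mult res :: "'a \<Rightarrow> 'a \<Rightarrow> 'a"
    and one bt :: 'a and k :: nat and a b :: "'a list"
  assumes "residuated_pomonoid le mult res one"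
    and "is_bottom le bt"
    and "k \<ge> 1"
    and "a \<in> Lex mult bt k" and "b \<in> Lex mult bt k"
  shows "delta le mult res k a b = k + 1 \<or> delta le mult res k a b \<le> gamma mult res k a b"
proof (rule ccontr)
  let ?d = "delta le mult res k a b" and ?g = "gamma mult res k a b"
  let ?c = "res (a ! (?g - 1)) (b ! (?g - 1))"
  assume "\<not> ?thesis"
  then have d_ne: "?d \<noteq> k + 1" and g_lt_d: "?g < ?d" by auto
  note d_holds = first_index_holds[OF d_ne[unfolded delta_eq_first_index], folded delta_eq_first_index]
  then have "?g \<noteq> k + 1" using g_lt_d by auto
  note g_holds = first_index_holds[OF this[unfolded gamma_eq_first_index], folded gamma_eq_first_index]
  have "\<not> strict le (mult ?c (b ! (?g - 1))) (a ! (?g - 1))"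
    using first_index_le[OF g_holds(1)] g_lt_d unfolding delta_eq_first_index by fastforce
  with assms(1) have c_mult: "mult ?c (b ! (?g - 1)) = a ! (?g - 1)"
    by (rule residuated_mult_res_eq_if_not_strict)
  have assoc: "\<And>x y z. mult (mult x y) z = mult x (mult y z)"
    using assms(1) unfolding residuated_pomonoid_def by blast
  have "?c \<notin> Icanc mult" using g_holds(2) by (simp add: Cnon_def)
  then have "a ! (?g - 1) \<in> Cnon mult"
    using Icanc_left_factor[OF assoc] c_mult by (metis Cnon_def DiffI UNIV_I)
  then have "a ! (?d - 1) = bt"
    using Lex_nth_bottom_after_Cnon[OF assms(4)] length_Lex[OF assms(4)] g_holds(1) d_holds(1) g_lt_d
    by auto
  then show False
    using d_holds(2) residuated_bottom_not_strict[OF assms(1,2)] by simp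
qed

end
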